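(* Let $\mathbf a\in\mathbb{R}^{\mathbb{N}}$. If the linear centrality $f^{\mathbf a}$ is rank monotone, then it is score monotone.
   Context: Graphs are finite directed graphs; $d_G(x,y)$ is the shortest directed path length from $x$ to $y$ ($\infty$ if none). The linear centrality is $f^{\mathbf a}_G(i)=\sum_{z\in V_G,\ d_G(z,i)<\infty}a_{d_G(z,i)}$. For a graph $G$ and distinct nodes $x,y$ with $(x,y)\notin E_G$, let $G'$ be $G$ with the arc $x\to y$ added. A centrality $f$ is score monotone if for all such $G,x,y$, $f_{G'}(y)>f_G(y)$. It is rank monotone if for all such $G,x,y$ and every node $w\ne y$: if $f_G(w)\le f_G(y)$ then $f_{G'}(w)<f_{G'}(y)$. *)

theory Defs
  imports Main "HOL-Library.Extended_Nat"
begin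

type_synonym graph = "nat set \<times> (nat \<times> nat) set"

definition nodes :: "graph \<Rightarrow> nat set" where "nodes G = fst G"
definition arcs :: "graph \<Rightarrow> (nat \<times> nat) set" where "arcs G = snd G"

definition wf_graph :: "graph \<Rightarrow> bool" where
  "wf_graph G \<longleftrightarrow> finite (nodes G) \<and> arcs G \<subseteq> nodes G \<times> nodes G"

definition reaches :: "graph \<Rightarrow> nat \<Rightarrow> nat \<Rightarrow> bool" where
  "reaches G x y \<longleftrightarrow> x \<in> nodes G \<and> (\<exists>n. (x, y) \<in> arcs G ^^ n)"

definition dist :: "graph \<Rightarrow> nat \<Rightarrow> nat \<Rightarrow> enat" where
  "dist G x y = (if reaches G x y then enat (LEAST n. (x, y) \<in> arcs G ^^ n) else \<infinity>)"

definition lin_cent :: "(nat \<Rightarrow> real) \<Rightarrow> graph \<Rightarrow> nat \<Rightarrow> real" where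
  "lin_cent a G i = (\<Sum>z\<in>{z \<in> nodes G. dist G z i < \<infinity>}. a (the_enat (dist G z i)))"

definition add_arc :: "graph \<Rightarrow> nat \<Rightarrow> nat \<Rightarrow> graph" where
  "add_arc G x y = (nodes G, insert (x, y) (arcs G))"

definition score_monotone :: "(graph \<Rightarrow> nat \<Rightarrow> real) \<Rightarrow> bool" where
  "score_monotone f \<longleftrightarrow>
     (\<forall>G x y. wf_graph G \<and> x \<in> nodes G \<and> y \<in> nodes G \<and> x \<noteq> y \<and> (x, y) \<notin> arcs G
        \<longrightarrow> f (add_arc G x y) y > f G y)"

definition rank_monotone :: "(graph \<Rightarrow> nat \<Rightarrow> real) \<Rightarrow> bool" where
  "rank_monotone f \<longleftrightarrow>
     (\<forall>G x y. wf_graph G \<and> x \<in> nodes G \<and> y \<in> nodes G \<and> x \<noteq> y \<and> (x, y) \<notin> arcs G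
        \<longrightarrow> (\<forall>w \<in> nodes G. w \<noteq> y \<longrightarrow> f G w \<le> f G y
              \<longrightarrow> f (add_arc G x y) w < f (add_arc G x y) y))"

end

theory Submission
  imports Defs
begin

text \<open>Put a disjoint copy of G next to G. In the union the copy y' of y has the same
  score as y, namely f_G(y). Adding the arc x \<rightarrow> y inside the original part leaves the
  score of y' unchanged, so rank monotonicity applied to w = y' gives
  f_G(y) = f(y') < f_{G+xy}(y).\<close>

lemma lin_cent_reaches:
  "lin_cent a G v = (\<Sum>z | reaches G z v. a (the_enat (dist G z v)))"
proof -
  have "{z \<in> nodes G. dist G z v < \<infinity>} = {z. reaches G z v}"
    by (auto simp: dist_def reaches_def)
  then show ?thesis
    unfolding lin_cent_def by simp
qed

lemma lin_cent_cong:
  assumes "\<And>z. reaches G z v \<longleftrightarrow> reaches H z v"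
    and "\<And>z n. (z, v) \<in> arcs G ^^ n \<longleftrightarrow> (z, v) \<in> arcs H ^^ n"
  shows "lin_cent a G v = lin_cent a H v"
proof -
  have "dist G z v = dist H z v" for z
    unfolding dist_def by (simp only: assms)
  then show ?thesis
    unfolding lin_cent_reaches assms(1) by simp
qed

lemma relpow_source_mem:
  "(u, v) \<in> E ^^ n \<Longrightarrow> E \<subseteq> V \<times> V \<Longrightarrow> v \<in> V \<Longrightarrow> u \<in> V"
  by (induction n arbitrary: v) auto

lemma relpow_Un_no_arcs_into:
  assumes "E \<subseteq> V \<times> V" "Range F \<inter> V = {}" "v \<in> V"
  shows "(u, v) \<in> (E \<union> F) ^^ n \<longleftrightarrow> (u, v) \<in> E ^^ n"
  using assms(3)
proof (induction n arbitrary: v)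
  case (Suc n)
  have "(m, v) \<in> E \<union> F \<longleftrightarrow> (m, v) \<in> E" for m
    using assms(2) Suc.prems by blast
  moreover have "(m, v) \<in> E \<Longrightarrow> m \<in> V" for m
    using assms(1) by blast
  ultimately show ?case
    using Suc.IH by auto
qed simp

lemma lin_cent_Un_disjoint:
  assumes "E \<subseteq> V \<times> V" "F \<subseteq> W \<times> W" "V \<inter> W = {}" "v \<in> V"
  shows "lin_cent a (V \<union> W, E \<union> F) v = lin_cent a (V, E) v"
proof (rule lin_cent_cong)
  have paths: "(z, v) \<in> (E \<union> F) ^^ n \<longleftrightarrow> (z, v) \<in> E ^^ n" for z n
    using assms by (intro relpow_Un_no_arcs_into) auto
  then show "(z, v) \<in> arcs (V \<union> W, E \<union> F) ^^ n \<longleftrightarrow> (z, v) \<in> arcs (V, E) ^^ n" for z n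
    by (simp add: arcs_def)
  show "reaches (V \<union> W, E \<union> F) z v \<longleftrightarrow> reaches (V, E) z v" for z
    using paths relpow_source_mem[OF _ assms(1) assms(4)]
    by (auto simp: reaches_def nodes_def arcs_def)
qed

lemma relpow_image:
  assumes "inj h"
  shows "(h u, h v) \<in> (map_prod h h ` E) ^^ n \<longleftrightarrow> (u, v) \<in> E ^^ n"
proof (induction n arbitrary: v)
  case 0
  then show ?case
    using assms by (simp add: inj_eq)
next
  case (Suc n)
  show ?case
  proof
    assume "(h u, h v) \<in> (map_prod h h ` E) ^^ Suc n"
    then obtain m where "(h u, m) \<in> (map_prod h h ` E) ^^ n" "(m, h v) \<in> map_prod h h ` E"
      by (rule relpow_Suc_E)
    then show "(u, v) \<in> E ^^ Suc n"
      using Suc.IH assms by (auto simp: inj_eq)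
  next
    assume "(u, v) \<in> E ^^ Suc n"
    then show "(h u, h v) \<in> (map_prod h h ` E) ^^ Suc n"
      using Suc.IH by force
  qed
qed

lemma lin_cent_image:
  assumes "inj h"
  shows "lin_cent a (h ` V, map_prod h h ` E) (h v) = lin_cent a (V, E) v"
proof -
  let ?H = "(h ` V, map_prod h h ` E)"
  have reaches: "reaches ?H (h z) (h v) \<longleftrightarrow> reaches (V, E) z v" for z
    using relpow_image[OF assms] assms
    by (simp add: reaches_def nodes_def arcs_def inj_image_mem_iff)
  have dist: "dist ?H (h z) (h v) = dist (V, E) z v" for z
    using reaches relpow_image[OF assms] by (simp add: dist_def arcs_def)
  have "{z. reaches ?H z (h v)} = h ` {z. reaches (V, E) z v}"
  proof (intro set_eqI iffI)
    fix z
    assume "z \<in> {z. reaches ?H z (h v)}"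
    moreover from this obtain z' where "z = h z'"
      by (auto simp: reaches_def nodes_def)
    ultimately show "z \<in> h ` {z. reaches (V, E) z v}"
      using reaches by blast
  qed (use reaches in blast)
  moreover have "inj_on h {z. reaches (V, E) z v}"
    using assms by (rule inj_on_subset) simp
  ultimately show ?thesis
    unfolding lin_cent_reaches by (simp add: sum.reindex dist)
qed

lemma lin_cent_Un_copy:
  assumes "inj h" "V \<inter> h ` V = {}" "E \<subseteq> V \<times> V" "F \<subseteq> V \<times> V" "y \<in> V"
  shows "lin_cent a (V \<union> h ` V, F \<union> map_prod h h ` E) (h y) = lin_cent a (V, E) y"
    and "lin_cent a (V \<union> h ` V, F \<union> map_prod h h ` E) y = lin_cent a (V, F) y"
proof -
  have copy: "map_prod h h ` E \<subseteq> h ` V \<times> h ` V"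
    using assms(3) by auto
  show "lin_cent a (V \<union> h ` V, F \<union> map_prod h h ` E) (h y) = lin_cent a (V, E) y"
    using lin_cent_Un_disjoint[OF copy assms(4), of "h y" a] assms(2,5) lin_cent_image[OF assms(1)]
    by (simp add: Un_commute Int_commute)
  show "lin_cent a (V \<union> h ` V, F \<union> map_prod h h ` E) y = lin_cent a (V, F) y"
    using lin_cent_Un_disjoint[OF assms(4) copy assms(2,5)] .
qed

lemma finite_disjoint_copy:
  assumes "finite (V :: nat set)"
  obtains h where "inj h" "V \<inter> h ` V = {}"
proof
  show "inj ((+) (Suc (Max V)))"
    by simp
  show "V \<inter> (+) (Suc (Max V)) ` V = {}"
    using assms by (fastforce dest: Max_ge)
qed

theorem lemma1:
  fixes a :: "nat \<Rightarrow> real"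
  assumes "rank_monotone (lin_cent a)"
  shows "score_monotone (lin_cent a)"
  unfolding score_monotone_def
proof (intro allI impI, elim conjE)
  fix G x y
  assume wf: "wf_graph G" and x: "x \<in> nodes G" and y: "y \<in> nodes G" and "x \<noteq> y"
    and xy: "(x, y) \<notin> arcs G"
  obtain V E where G: "G = (V, E)"
    by fastforce
  have V: "finite V" "E \<subseteq> V \<times> V" "x \<in> V" "y \<in> V" "insert (x, y) E \<subseteq> V \<times> V"
    using wf x y by (auto simp: G wf_graph_def nodes_def arcs_def)
  obtain h where h: "inj h" "V \<inter> h ` V = {}"
    using finite_disjoint_copy[OF V(1)] .
  define H where "H = (V \<union> h ` V, E \<union> map_prod h h ` E)"
  have H': "add_arc H x y = (V \<union> h ` V, insert (x, y) E \<union> map_prod h h ` E)"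
    by (simp add: H_def add_arc_def nodes_def arcs_def)
  have "wf_graph H" "x \<in> nodes H" "y \<in> nodes H" "(x, y) \<notin> arcs H" "h y \<in> nodes H"
    using V h xy by (auto simp: H_def G wf_graph_def nodes_def arcs_def)
  moreover have "h y \<noteq> y"
    using V(4) h(2) by (metis disjoint_iff image_eqI)
  moreover have "lin_cent a H (h y) \<le> lin_cent a H y"
    unfolding H_def using lin_cent_Un_copy[OF h V(2,2,4)] by simp
  ultimately have "lin_cent a (add_arc H x y) (h y) < lin_cent a (add_arc H x y) y"
    using assms \<open>x \<noteq> y\<close> unfolding rank_monotone_def by blast
  then show "lin_cent a G y < lin_cent a (add_arc G x y) y"
    unfolding H' using lin_cent_Un_copy[OF h V(2,5,4)]
    by (simp add: G add_arc_def nodes_def arcs_def)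
qed

end
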